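(* Let $a_1,a_2\in\mathbb{R}^2$, let $e$ be a directed segment in $\mathbb{R}^2$ with supporting line $\ell$ (directed as $e$), and let $\rho>0$. Call the monotonicity predicate true if there exist points $p_1,p_2\in\ell$ with $p_1$ not after $p_2$ in the direction of $e$ such that $\|p_1-a_1\|\le\rho$ and $\|p_2-a_2\|\le\rho$. Consider: (d) $\ell$ intersects the circle of radius $\rho$ centered at $a_1$; (e) $\ell$ intersects the circle of radius $\rho$ centered at $a_2$; (f) the angle between the vector $a_2-a_1$ and the direction of $e$ is at most $\pi/2$; (g) $\|a_1-a_2\|\le 2\rho$. If $(d)\wedge(e)\wedge(f)$ is true, then the monotonicity predicate is true. Furthermore, if (g) is false, or if $\ell$ does not intersect the lens formed by the two closed disks of radius $\rho$ centered at $a_1$ and $a_2$ (their intersection), then $(d)\wedge(e)\wedge(f)$ is equivalent to the monotonicity predicate. *)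

theory Defs
  imports "HOL-Analysis.Analysis"
begin

text \<open>Unsigned angle between two vectors, in [0, pi]. (For a zero vector the
  quotient is 0 and the angle is pi/2 by this convention.)\<close>
definition vec_angle :: "real^2 \<Rightarrow> real^2 \<Rightarrow> real" where
  "vec_angle u v = arccos ((u \<bullet> v) / (norm u * norm v))"

definition supp_line :: "real^2 \<Rightarrow> real^2 \<Rightarrow> (real^2) set" where
  "supp_line s t = {s + c *\<^sub>R (t - s) | c. True}"

definition monotone_pred :: "real^2 \<Rightarrow> real^2 \<Rightarrow> real^2 \<Rightarrow> real^2 \<Rightarrow> real \<Rightarrow> bool" where
  "monotone_pred a1 a2 s t \<rho> \<longleftrightarrow>
     (\<exists>p1 \<in> supp_line s t. \<exists>p2 \<in> supp_line s t.
        (p2 - p1) \<bullet> (t - s) \<ge> 0 \<and> norm (p1 - a1) \<le> \<rho> \<and> norm (p2 - a2) \<le> \<rho>)"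

end

theory Submission
  imports Defs
begin

text \<open>Being connected and unbounded, the line
  meets a circle iff it meets the closed disk, and then it does so at the orthogonal projection
  of the centre; (f) says that the projection of \<open>a\<^sub>1\<close> comes no later than that of \<open>a\<^sub>2\<close>,
  which gives the first claim. Conversely, the parameters of points within \<open>\<rho>\<close> of \<open>a\<^sub>i\<close> form
  an interval \<open>I\<^sub>i\<close> containing the projection parameter \<open>k\<^sub>i\<close>. Monotonicity yields
  \<open>x \<in> I\<^sub>1\<close>, \<open>y \<in> I\<^sub>2\<close> with \<open>x \<le> y\<close>; if (f) fails then \<open>k\<^sub>2 < k\<^sub>1\<close>, so the two intervals
  cross and hence overlap, which puts a point of the line into the lens and forces (g).\<close>

lemma affine_hull_2_eq_line: "affine hull {s, t} = {s + c *\<^sub>R (t - s) | c. True}"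
proof -
  have "u *\<^sub>R s + v *\<^sub>R t = s + v *\<^sub>R (t - s)" if "u + v = 1" for u v :: real
  proof -
    from that have "u *\<^sub>R s + v *\<^sub>R t = (1 - v) *\<^sub>R s + v *\<^sub>R t"
      by (simp flip: eq_diff_eq)
    also have "\<dots> = s + v *\<^sub>R (t - s)"
      by (simp add: algebra_simps)
    finally show ?thesis .
  qed
  moreover have "s + c *\<^sub>R (t - s) = (1 - c) *\<^sub>R s + c *\<^sub>R t" for c :: real
    by (simp add: algebra_simps)
  ultimately show ?thesis
    unfolding affine_hull_2 by (smt (verit, best) Collect_cong)
qed

lemma connected_supp_line: "connected (supp_line s t)"
  unfolding supp_line_def affine_hull_2_eq_line [symmetric]
  by (intro convex_connected affine_imp_convex affine_affine_hull)

lemma unbounded_supp_line: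
  assumes "s \<noteq> t"
  shows "\<not> bounded (supp_line s t)"
proof
  assume "bounded (supp_line s t)"
  then obtain a where "affine hull {s, t} = {a}"
    using affine_bounded_eq_trivial [OF affine_affine_hull, of "{s, t}"]
    unfolding supp_line_def affine_hull_2_eq_line [symmetric] by auto
  with hull_subset [of "{s, t}" affine] assms show False by auto
qed

lemma connected_unbounded_Int_sphere_iff:
  fixes S :: "'a::{real_normed_vector, perfect_space} set"
  assumes "connected S" "\<not> bounded S"
  shows "S \<inter> sphere a r \<noteq> {} \<longleftrightarrow> S \<inter> cball a r \<noteq> {}"
proof
  assume "S \<inter> cball a r \<noteq> {}"
  moreover have "S - cball a r \<noteq> {}"
    using assms(2) bounded_cball bounded_subset by blast
  ultimately show "S \<inter> sphere a r \<noteq> {}"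
    using connected_Int_frontier [OF assms(1), of "cball a r"] by simp
qed auto

lemma supp_line_Int_sphere_iff_cball:
  assumes "s \<noteq> t"
  shows "supp_line s t \<inter> sphere a r \<noteq> {} \<longleftrightarrow> supp_line s t \<inter> cball a r \<noteq> {}"
  using connected_unbounded_Int_sphere_iff connected_supp_line unbounded_supp_line assms
  by blast

lemma supp_line_Int_nonempty_iff:
  "supp_line s t \<inter> X \<noteq> {} \<longleftrightarrow> (\<exists>c. s + c *\<^sub>R (t - s) \<in> X)"
  by (auto simp: supp_line_def)

definition line_proj_coord :: "'a::real_inner \<Rightarrow> 'a \<Rightarrow> 'a \<Rightarrow> real" where
  "line_proj_coord s t a = ((a - s) \<bullet> (t - s)) / ((t - s) \<bullet> (t - s))"

lemma dist_line_proj_coord_le: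
  fixes s t a :: "'a::real_inner"
  assumes "s \<noteq> t"
  shows "dist a (s + line_proj_coord s t a *\<^sub>R (t - s)) \<le> dist a (s + c *\<^sub>R (t - s))"
proof -
  define v where "v = t - s"
  define k where "k = line_proj_coord s t a"
  define w where "w = a - (s + k *\<^sub>R v)"
  have "w \<bullet> v = (a - s) \<bullet> v - k * (v \<bullet> v)"
    by (simp add: w_def inner_diff_left inner_add_left)
  also have "\<dots> = 0"
    using assms by (simp add: k_def v_def line_proj_coord_def)
  finally have "orthogonal w ((k - c) *\<^sub>R v)"
    by (simp add: orthogonal_def)
  then have "(norm (w + (k - c) *\<^sub>R v))\<^sup>2 = (norm w)\<^sup>2 + (norm ((k - c) *\<^sub>R v))\<^sup>2"
    by (rule norm_add_Pythagorean)
  then have "(norm w)\<^sup>2 \<le> (norm (w + (k - c) *\<^sub>R v))\<^sup>2"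
    by (metis le_add_same_cancel1 zero_le_power2)
  then have "norm w \<le> norm (w + (k - c) *\<^sub>R v)"
    by (rule power2_le_imp_le) (rule norm_ge_zero)
  moreover have "w + (k - c) *\<^sub>R v = a - (s + c *\<^sub>R v)"
    by (simp add: w_def scaleR_diff_left)
  ultimately show ?thesis
    unfolding dist_norm k_def [symmetric] v_def [symmetric] w_def [symmetric] by simp
qed

lemma line_proj_coord_le_iff:
  fixes s t a b :: "'a::real_inner"
  assumes "s \<noteq> t"
  shows "line_proj_coord s t a \<le> line_proj_coord s t b \<longleftrightarrow> 0 \<le> (b - a) \<bullet> (t - s)"
proof -
  have "0 < (t - s) \<bullet> (t - s)"
    using assms by simp
  then show ?thesis
    unfolding line_proj_coord_def
    by (metis divide_le_cancel inner_diff_left less_asym diff_ge_0_iff_ge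
        diff_diff_eq2 diff_add_cancel)
qed

lemma line_proj_in_cball:
  assumes "s \<noteq> t" "supp_line s t \<inter> cball a r \<noteq> {}"
  shows "s + line_proj_coord s t a *\<^sub>R (t - s) \<in> cball a r"
proof -
  obtain c where "dist a (s + c *\<^sub>R (t - s)) \<le> r"
    using assms(2) by (auto simp: supp_line_def)
  then show ?thesis
    using dist_line_proj_coord_le [OF assms(1), of a c] by simp
qed

lemma is_interval_line_preimage_cball:
  fixes s v a :: "'a::real_normed_vector"
  shows "is_interval {c. s + c *\<^sub>R v \<in> cball a r}"
proof -
  have "{c. s + c *\<^sub>R v \<in> cball a r} = (\<lambda>c. c *\<^sub>R v) -` cball (a - s) r"
    by (simp add: set_eq_iff dist_norm diff_diff_eq)
  then show ?thesis
    using convex_linear_vimage [OF linear_scaleR_left convex_cball] is_interval_convex_1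
    by metis
qed

lemma is_interval_crossing_Int_nonempty:
  fixes I J :: "real set"
  assumes "is_interval I" "is_interval J"
    and "x \<in> I" "k \<in> I" "y \<in> J" "l \<in> J" "x \<le> y" "l \<le> k"
  shows "I \<inter> J \<noteq> {}"
proof (cases "y \<le> k")
  case True
  then have "y \<in> I"
    using mem_is_interval_1_I [OF assms(1,3,4) assms(7)] by simp
  with assms(5) show ?thesis
    by blast
next
  case False
  then have "k \<in> J"
    using mem_is_interval_1_I [OF assms(2,6,5) assms(8)] by simp
  with assms(4) show ?thesis
    by blast
qed

lemma vec_angle_le_pi_half_iff: "vec_angle u v \<le> pi / 2 \<longleftrightarrow> 0 \<le> u \<bullet> v"
proof -
  define x where "x = (u \<bullet> v) / (norm u * norm v)"
  have "\<bar>x\<bar> \<le> 1"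
    using Cauchy_Schwarz_ineq2 [of u v]
    by (cases "norm u * norm v = 0") (auto simp: x_def abs_divide divide_le_eq_1)
  then have "vec_angle u v \<le> pi / 2 \<longleftrightarrow> 0 \<le> x"
    using arccos_le_mono [of x 0] by (simp add: vec_angle_def x_def)
  also have "\<dots> \<longleftrightarrow> 0 \<le> u \<bullet> v"
    by (cases "u = 0 \<or> v = 0") (auto simp: x_def zero_le_divide_iff mult_le_0_iff)
  finally show ?thesis .
qed

lemma monotone_pred_iff_parameters:
  assumes "s \<noteq> t"
  shows "monotone_pred a1 a2 s t \<rho> \<longleftrightarrow>
    (\<exists>x y. x \<le> y \<and> s + x *\<^sub>R (t - s) \<in> cball a1 \<rho> \<and> s + y *\<^sub>R (t - s) \<in> cball a2 \<rho>)"
proof -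
  have pos: "0 < (t - s) \<bullet> (t - s)"
    using assms by simp
  have "0 \<le> (s + y *\<^sub>R (t - s) - (s + x *\<^sub>R (t - s))) \<bullet> (t - s) \<longleftrightarrow> x \<le> y"
    for x y :: real
    using mult_le_cancel_right_pos [OF pos, of 0 "y - x"] by (simp add: algebra_simps)
  moreover have "norm (p - a) \<le> \<rho> \<longleftrightarrow> p \<in> cball a \<rho>" for p a :: "real^2"
    by (simp add: dist_norm norm_minus_commute)
  ultimately show ?thesis
    unfolding monotone_pred_def supp_line_def by blast
qed

lemma monotone_pred_if_projections_ordered:
  assumes "s \<noteq> t"
    and "supp_line s t \<inter> cball a1 \<rho> \<noteq> {}" "supp_line s t \<inter> cball a2 \<rho> \<noteq> {}"
    and "0 \<le> (a2 - a1) \<bullet> (t - s)"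
  shows "monotone_pred a1 a2 s t \<rho>"
  unfolding monotone_pred_iff_parameters [OF assms(1)]
  using line_proj_in_cball [OF assms(1,2)] line_proj_in_cball [OF assms(1,3)]
    line_proj_coord_le_iff [OF assms(1)] assms(4)
  by blast

lemma monotone_pred_imp_Int_cball:
  assumes "monotone_pred a1 a2 s t \<rho>"
  shows "supp_line s t \<inter> cball a1 \<rho> \<noteq> {}" "supp_line s t \<inter> cball a2 \<rho> \<noteq> {}"
  using assms by (auto simp: monotone_pred_def dist_norm norm_minus_commute)

lemma supp_line_Int_lens_if_monotone_reversed:
  assumes "s \<noteq> t" "monotone_pred a1 a2 s t \<rho>" "(a2 - a1) \<bullet> (t - s) < 0"
  shows "supp_line s t \<inter> (cball a1 \<rho> \<inter> cball a2 \<rho>) \<noteq> {}"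
proof -
  define I where "I a = {c. s + c *\<^sub>R (t - s) \<in> cball a \<rho>}" for a
  obtain x y where xy: "x \<in> I a1" "y \<in> I a2" "x \<le> y"
    using assms(2) unfolding monotone_pred_iff_parameters [OF assms(1)] I_def by blast
  have "line_proj_coord s t a1 \<in> I a1" "line_proj_coord s t a2 \<in> I a2"
    using line_proj_in_cball [OF assms(1) monotone_pred_imp_Int_cball(1) [OF assms(2)]]
      line_proj_in_cball [OF assms(1) monotone_pred_imp_Int_cball(2) [OF assms(2)]]
    by (simp_all add: I_def)
  moreover have "line_proj_coord s t a2 \<le> line_proj_coord s t a1"
    using line_proj_coord_le_iff [OF assms(1), of a2 a1] assms(3)
    by (simp add: inner_diff_left)
  moreover have "is_interval (I a)" for a
    unfolding I_def by (rule is_interval_line_preimage_cball)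
  ultimately have "I a1 \<inter> I a2 \<noteq> {}"
    using is_interval_crossing_Int_nonempty xy by blast
  then show ?thesis
    by (auto simp: I_def supp_line_Int_nonempty_iff)
qed

theorem mainTheorem7:
  fixes a1 a2 s t :: "real^2" and \<rho> :: real
  assumes "s \<noteq> t" and "\<rho> > 0"
  defines "d \<equiv> supp_line s t \<inter> sphere a1 \<rho> \<noteq> {}"
      and "e \<equiv> supp_line s t \<inter> sphere a2 \<rho> \<noteq> {}"
      and "f \<equiv> vec_angle (a2 - a1) (t - s) \<le> pi / 2"
      and "g \<equiv> norm (a1 - a2) \<le> 2 * \<rho>"
  shows "(d \<and> e \<and> f \<longrightarrow> monotone_pred a1 a2 s t \<rho>) \<and>
         ((\<not> g \<or> supp_line s t \<inter> (cball a1 \<rho> \<inter> cball a2 \<rho>) = {}) \<longrightarrow>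
            ((d \<and> e \<and> f) \<longleftrightarrow> monotone_pred a1 a2 s t \<rho>))"
proof -
  have d: "d \<longleftrightarrow> supp_line s t \<inter> cball a1 \<rho> \<noteq> {}"
    and e: "e \<longleftrightarrow> supp_line s t \<inter> cball a2 \<rho> \<noteq> {}"
    unfolding d_def e_def by (simp_all add: supp_line_Int_sphere_iff_cball [OF assms(1)])
  have f: "f \<longleftrightarrow> \<not> (a2 - a1) \<bullet> (t - s) < 0"
    unfolding f_def vec_angle_le_pi_half_iff by (simp add: not_less)
  have g: g if "supp_line s t \<inter> (cball a1 \<rho> \<inter> cball a2 \<rho>) \<noteq> {}"
  proof -
    from that obtain p where "dist a1 p \<le> \<rho>" "dist a2 p \<le> \<rho>"
      by auto
    then show g
      using dist_triangle2 [of a1 a2 p] by (simp add: g_def dist_norm)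
  qed
  show ?thesis
    using d e f g assms(1) monotone_pred_if_projections_ordered monotone_pred_imp_Int_cball
      supp_line_Int_lens_if_monotone_reversed
    by (metis not_less)
qed

end
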